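(* Let $(X,S)$ be an $S$-metric space, $r\ge0$, and let $\{x_n\}$ be an $r$-statistically convergent sequence in $X$. If $\{\xi_n\}$ is a sequence in $st\text{-}LIM^r x_n$ converging to $\xi\in X$, then $\xi\in st\text{-}LIM^r x_n$.
   Context: An $S$-metric on a nonempty set $X$ is a function $S:X^3\to[0,\infty)$ such that for all $x,y,z,a\in X$: $S(x,y,z)=0$ if and only if $x=y=z$, and $S(x,y,z)\le S(x,x,a)+S(y,y,a)+S(z,z,a)$. A sequence $\{\xi_n\}$ converges to $\xi$ if for every $\varepsilon>0$ there is $k$ with $S(\xi_n,\xi_n,\xi)<\varepsilon$ for all $n\ge k$. For $B\subset\mathbb N$ the natural density is $\delta(B)=\lim_{n\to\infty}\frac{|\{k\in B:k\le n\}|}{n}$ when the limit exists. For $r\ge0$, $\{x_n\}$ is $r$-statistically convergent to $x$ if for every $\varepsilon>0$, $\delta(\{n\in\mathbb N: S(x_n,x_n,x)\ge r+\varepsilon\})=0$; $st\text{-}LIM^r x_n$ denotes the set of all such $x\in X$, and $\{x_n\}$ is called $r$-statistically convergent if this set is nonempty. *)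

theory Defs
  imports "HOL-Analysis.Analysis"
begin

definition S_metric :: "'a set \<Rightarrow> ('a \<Rightarrow> 'a \<Rightarrow> 'a \<Rightarrow> real) \<Rightarrow> bool" where
  "S_metric X S \<longleftrightarrow> X \<noteq> {} \<and>
     (\<forall>x\<in>X. \<forall>y\<in>X. \<forall>z\<in>X. S x y z \<ge> 0) \<and>
     (\<forall>x\<in>X. \<forall>y\<in>X. \<forall>z\<in>X. S x y z = 0 \<longleftrightarrow> x = y \<and> y = z) \<and>
     (\<forall>x\<in>X. \<forall>y\<in>X. \<forall>z\<in>X. \<forall>a\<in>X. S x y z \<le> S x x a + S y y a + S z z a)"

definition S_converges :: "('a \<Rightarrow> 'a \<Rightarrow> 'a \<Rightarrow> real) \<Rightarrow> (nat \<Rightarrow> 'a) \<Rightarrow> 'a \<Rightarrow> bool" where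
  "S_converges S \<xi>s \<xi> \<longleftrightarrow> (\<forall>\<epsilon>>0. \<exists>k. \<forall>n\<ge>k. S (\<xi>s n) (\<xi>s n) \<xi> < \<epsilon>)"

definition has_natural_density :: "nat set \<Rightarrow> real \<Rightarrow> bool" where
  "has_natural_density B d \<longleftrightarrow>
     ((\<lambda>n. real (card {k\<in>B. 1 \<le> k \<and> k \<le> n}) / real n) \<longlongrightarrow> d) sequentially"

definition st_LIM :: "('a \<Rightarrow> 'a \<Rightarrow> 'a \<Rightarrow> real) \<Rightarrow> 'a set \<Rightarrow> real \<Rightarrow> (nat \<Rightarrow> 'a) \<Rightarrow> 'a set" where
  "st_LIM S X r xs = {x\<in>X. \<forall>\<epsilon>>0.
      has_natural_density {n. 1 \<le> n \<and> S (xs n) (xs n) x \<ge> r + \<epsilon>} 0}"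

definition r_stat_convergent :: "('a \<Rightarrow> 'a \<Rightarrow> 'a \<Rightarrow> real) \<Rightarrow> 'a set \<Rightarrow> real \<Rightarrow> (nat \<Rightarrow> 'a) \<Rightarrow> bool" where
  "r_stat_convergent S X r xs \<longleftrightarrow> st_LIM S X r xs \<noteq> {}"

end

theory Submission
  imports Defs
begin

text \<open>Symmetry and the triangle inequality of an S-metric give
  S(x n, x n, \<xi>) \<le> S(x n, x n, y) + 2 S(y, y, \<xi>). If y belongs to st-LIM^r x and
  2 S(y, y, \<xi>) < \<epsilon>/2, the indices n with S(x n, x n, \<xi>) \<ge> r + \<epsilon> are therefore among
  those with S(x n, x n, y) \<ge> r + \<epsilon>/2, a set of density zero. So st-LIM^r x is closed,
  and the terms of a sequence converging to \<xi> come arbitrarily close to \<xi>.\<close>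

lemma S_metric_triangle_ineq:
  assumes "S_metric X S" "x \<in> X" "y \<in> X" "z \<in> X" "a \<in> X"
  shows "S x y z \<le> S x x a + S y y a + S z z a"
proof -
  have "\<forall>x\<in>X. \<forall>y\<in>X. \<forall>z\<in>X. \<forall>a\<in>X. S x y z \<le> S x x a + S y y a + S z z a"
    using assms(1) unfolding S_metric_def by auto
  then show ?thesis using assms(2-5) by blast
qed

lemma S_metric_self_eq_0:
  assumes "S_metric X S" "x \<in> X"
  shows "S x x x = 0"
  using assms unfolding S_metric_def by auto

lemma S_metric_sym:
  assumes "S_metric X S" "x \<in> X" "y \<in> X"
  shows "S x x y = S y y x"
proof -
  have "S x x y \<le> S x x x + S x x x + S y y x"
    using S_metric_triangle_ineq[OF assms(1) assms(2) assms(2) assms(3) assms(2)] .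
  moreover have "S y y x \<le> S y y y + S y y y + S x x y"
    using S_metric_triangle_ineq[OF assms(1) assms(3) assms(3) assms(2) assms(3)] .
  ultimately show ?thesis
    using S_metric_self_eq_0[OF assms(1)] assms(2,3) by fastforce
qed

lemma S_metric_triangle:
  assumes "S_metric X S" "x \<in> X" "y \<in> X" "a \<in> X"
  shows "S x x y \<le> S x x a + 2 * S a a y"
proof -
  have "S x x y = S y y x" using S_metric_sym[OF assms(1-3)] .
  also have "\<dots> \<le> S y y a + S y y a + S x x a"
    using S_metric_triangle_ineq[OF assms(1) assms(3) assms(3) assms(2) assms(4)] .
  also have "S y y a = S a a y" using S_metric_sym[OF assms(1) assms(3) assms(4)] .
  finally show ?thesis by linarith
qed

lemma has_natural_density_zero_subset:
  assumes "has_natural_density B 0" "A \<subseteq> B"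
  shows "has_natural_density A 0"
  unfolding has_natural_density_def
proof (rule tendsto_sandwich[of "\<lambda>n. 0" _ _ "\<lambda>n. real (card {k\<in>B. 1 \<le> k \<and> k \<le> n}) / real n"])
  show "\<forall>\<^sub>F n in sequentially. 0 \<le> real (card {k \<in> A. 1 \<le> k \<and> k \<le> n}) / real n" by simp
  show "\<forall>\<^sub>F n in sequentially. real (card {k \<in> A. 1 \<le> k \<and> k \<le> n}) / real n
      \<le> real (card {k \<in> B. 1 \<le> k \<and> k \<le> n}) / real n"
  proof (rule always_eventually, rule allI)
    fix n
    have "finite {k \<in> B. 1 \<le> k \<and> k \<le> n}" by (rule finite_subset[of _ "{..n}"]) auto
    moreover have "{k \<in> A. 1 \<le> k \<and> k \<le> n} \<subseteq> {k \<in> B. 1 \<le> k \<and> k \<le> n}" using assms(2) by auto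
    ultimately have "card {k \<in> A. 1 \<le> k \<and> k \<le> n} \<le> card {k \<in> B. 1 \<le> k \<and> k \<le> n}"
      by (rule card_mono)
    then show "real (card {k \<in> A. 1 \<le> k \<and> k \<le> n}) / real n
      \<le> real (card {k \<in> B. 1 \<le> k \<and> k \<le> n}) / real n"
      by (simp add: divide_right_mono)
  qed
  show "(\<lambda>n. 0) \<longlonglongrightarrow> 0" by simp
  show "(\<lambda>n. real (card {k \<in> B. 1 \<le> k \<and> k \<le> n}) / real n) \<longlonglongrightarrow> 0"
    using assms(1) unfolding has_natural_density_def .
qed

lemma st_LIM_closed:
  assumes "S_metric X S" "\<forall>n. xs n \<in> X" "\<xi> \<in> X"
    and near: "\<forall>\<delta>>0. \<exists>y\<in>st_LIM S X r xs. S y y \<xi> < \<delta>"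
  shows "\<xi> \<in> st_LIM S X r xs"
  unfolding st_LIM_def
proof (intro CollectI conjI allI impI)
  fix \<epsilon> :: real
  assume "\<epsilon> > 0"
  then obtain y where y: "y \<in> st_LIM S X r xs" and y_near: "S y y \<xi> < \<epsilon>/4"
    using near[rule_format, of "\<epsilon>/4"] by auto
  have "y \<in> X" and y_density: "has_natural_density {n. 1 \<le> n \<and> S (xs n) (xs n) y \<ge> r + \<epsilon>/2} 0"
    using y \<open>\<epsilon> > 0\<close> unfolding st_LIM_def by auto
  show "has_natural_density {n. 1 \<le> n \<and> S (xs n) (xs n) \<xi> \<ge> r + \<epsilon>} 0"
  proof (rule has_natural_density_zero_subset[OF y_density], safe)
    fix n
    assume "r + \<epsilon> \<le> S (xs n) (xs n) \<xi>"
    moreover have "S (xs n) (xs n) \<xi> \<le> S (xs n) (xs n) y + 2 * S y y \<xi>"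
      using S_metric_triangle[OF assms(1) _ assms(3) \<open>y \<in> X\<close>] assms(2) by blast
    ultimately show "r + \<epsilon>/2 \<le> S (xs n) (xs n) y" using y_near by linarith
  qed
qed (fact \<open>\<xi> \<in> X\<close>)

theorem theorem4p4:
  fixes X :: "'a set" and S :: "'a \<Rightarrow> 'a \<Rightarrow> 'a \<Rightarrow> real"
    and r :: real and xs :: "nat \<Rightarrow> 'a" and \<xi>s :: "nat \<Rightarrow> 'a" and \<xi> :: 'a
  assumes "S_metric X S"
    and "r \<ge> 0"
    and "\<forall>n. xs n \<in> X"
    and "r_stat_convergent S X r xs"
    and "\<forall>n. \<xi>s n \<in> st_LIM S X r xs"
    and "\<xi> \<in> X"
    and "S_converges S \<xi>s \<xi>"
  shows "\<xi> \<in> st_LIM S X r xs"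
proof (rule st_LIM_closed[OF assms(1,3,6)], intro allI impI)
  fix \<delta> :: real
  assume "\<delta> > 0"
  then obtain k where "\<forall>n\<ge>k. S (\<xi>s n) (\<xi>s n) \<xi> < \<delta>"
    using assms(7) unfolding S_converges_def by blast
  then have "S (\<xi>s k) (\<xi>s k) \<xi> < \<delta>" by blast
  then show "\<exists>y\<in>st_LIM S X r xs. S y y \<xi> < \<delta>" using assms(5) by blast
qed

end
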